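(* Let $\mathsf{X}=\mathsf{Y}=\mathbb{R}^d$ with probability measures $\mu,\nu$ and cost $c(x,y)=\|x-y\|^2$, let $\pi_\varepsilon$ be the $(c,\varepsilon)$-cyclically invariant coupling for each $\varepsilon>0$ (assumed to exist), and assume $\pi_\varepsilon\to\pi_*$ weakly as $\varepsilon\to0$ for some $\pi_*\in\Pi(\mu,\nu)$. Let $\Gamma:=\operatorname{spt}\pi_*$, $\mathsf{X}_0:=\operatorname{proj}_{\mathsf{X}}\Gamma$, $\mathsf{Y}_0:=\operatorname{proj}_{\mathsf{Y}}\Gamma$, and assume $\mathsf{X}_0$ is strictly convex. Consider $(x,y)\in(\mathsf{X}_0\times\mathsf{Y}_0)\setminus\Gamma$ with $x\in\partial\mathsf{X}_0$. Suppose that $\pi_*$ is given by a transport map $T:\mathsf{X}_0\to\mathbb{R}^d$ (i.e., $\Gamma=\{(x',T(x')):x'\in\mathsf{X}_0\}$) which is continuous on $B_r(x)\cap\mathsf{X}_0$ for some $r>0$. Then $I(x,y)>0$.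
   Context: $\mathsf{X}_0$ is strictly convex if for distinct $x,x'\in\mathsf{X}_0$ the open segment $(x,x')$ is contained in $\operatorname{Int}\mathsf{X}_0$. $\Pi(\mu,\nu)$ is the set of couplings and $P:=\mu\otimes\nu$. A coupling $\pi$ is $(c,\varepsilon)$-cyclically invariant if $\pi\sim P$ and its density admits a version $\frac{d\pi}{dP}:\mathsf{X}\times\mathsf{Y}\to(0,\infty)$ with $\prod_{i=1}^k\frac{d\pi}{dP}(x_i,y_i)=\exp\big(-\frac1\varepsilon[\sum_{i=1}^k c(x_i,y_i)-\sum_{i=1}^k c(x_i,y_{i+1})]\big)\prod_{i=1}^k\frac{d\pi}{dP}(x_i,y_{i+1})$ for all $k$ and points, $y_{k+1}:=y_1$. The function $I$ is $I(x,y):=\sup_{k\ge2}\sup_{(x_i,y_i)_{i=2}^k\subset\Gamma}\sup_{\sigma\in\Sigma(k)}\sum_{i=1}^k c(x_i,y_i)-\sum_{i=1}^k c(x_i,y_{\sigma(i)})$ with $(x_1,y_1):=(x,y)$ and $\Sigma(k)$ the permutations of $\{1,\dots,k\}$. $B_r(x)$ is the open ball. *)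

theory Defs
  imports "HOL-Probability.Probability" "HOL-Combinatorics.Permutations"
begin

definition coupling :: "'a measure \<Rightarrow> 'b measure \<Rightarrow> ('a \<times> 'b) measure \<Rightarrow> bool" where
  "coupling \<mu> \<nu> \<pi> \<longleftrightarrow> prob_space \<pi> \<and> sets \<pi> = sets (\<mu> \<Otimes>\<^sub>M \<nu>) \<and>
     distr \<pi> \<mu> fst = \<mu> \<and> distr \<pi> \<nu> snd = \<nu>"

definition cyclically_invariant ::
  "('a \<Rightarrow> 'b \<Rightarrow> real) \<Rightarrow> real \<Rightarrow> 'a measure \<Rightarrow> 'b measure \<Rightarrow> ('a \<times> 'b) measure \<Rightarrow> bool" where
  "cyclically_invariant c \<epsilon> \<mu> \<nu> \<pi> \<longleftrightarrow>
     absolutely_continuous (\<mu> \<Otimes>\<^sub>M \<nu>) \<pi> \<and> absolutely_continuous \<pi> (\<mu> \<Otimes>\<^sub>M \<nu>) \<and>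
     (\<exists>f :: 'a \<times> 'b \<Rightarrow> real.
        f \<in> borel_measurable (\<mu> \<Otimes>\<^sub>M \<nu>) \<and> (\<forall>z. f z > 0) \<and>
        \<pi> = density (\<mu> \<Otimes>\<^sub>M \<nu>) (\<lambda>z. ennreal (f z)) \<and>
        (\<forall>(k::nat) (xs :: nat \<Rightarrow> 'a) (ys :: nat \<Rightarrow> 'b).
           let ys' = (\<lambda>i. if i = k + 1 then ys 1 else ys i) in
           (\<Prod>i=1..k. f (xs i, ys i)) =
             exp (- (1 / \<epsilon>) * ((\<Sum>i=1..k. c (xs i) (ys i)) - (\<Sum>i=1..k. c (xs i) (ys' (i + 1)))))
             * (\<Prod>i=1..k. f (xs i, ys' (i + 1)))))"

definition weak_conv_at_zero :: "(real \<Rightarrow> 'a::topological_space measure) \<Rightarrow> 'a measure \<Rightarrow> bool" where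
  "weak_conv_at_zero \<pi>s \<pi> \<longleftrightarrow>
     (\<forall>g :: 'a \<Rightarrow> real. continuous_on UNIV g \<and> bounded (range g) \<longrightarrow>
        ((\<lambda>\<epsilon>. integral\<^sup>L (\<pi>s \<epsilon>) g) \<longlongrightarrow> integral\<^sup>L \<pi> g) (at_right 0))"

definition support :: "'a::topological_space measure \<Rightarrow> 'a set" where
  "support M = {z. \<forall>U. open U \<and> z \<in> U \<longrightarrow> emeasure M U > 0}"

definition strictly_convex_set :: "'a::real_normed_vector set \<Rightarrow> bool" where
  "strictly_convex_set X \<longleftrightarrow> (\<forall>x\<in>X. \<forall>x'\<in>X. x \<noteq> x' \<longrightarrow> open_segment x x' \<subseteq> interior X)"

definition I_fun :: "('a \<Rightarrow> 'b \<Rightarrow> real) \<Rightarrow> ('a \<times> 'b) set \<Rightarrow> 'a \<Rightarrow> 'b \<Rightarrow> ereal" where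
  "I_fun c \<Gamma> x y =
     (SUP p \<in> {(k, xs, ys, \<sigma>) | (k::nat) (xs::nat \<Rightarrow> 'a) (ys::nat \<Rightarrow> 'b) \<sigma>.
                 k \<ge> 2 \<and> xs 1 = x \<and> ys 1 = y \<and> (\<forall>i\<in>{2..k}. (xs i, ys i) \<in> \<Gamma>) \<and> \<sigma> permutes {1..k}}.
        (case p of (k, xs, ys, \<sigma>) \<Rightarrow>
           ereal ((\<Sum>i=1..k. c (xs i) (ys i)) - (\<Sum>i=1..k. c (xs i) (ys (\<sigma> i))))))"

end

theory Submission
  imports Defs
begin

text \<open>
  Since y \<in> Y0 we have y = T x' for some x' \<in> X0, and v := y - T x \<noteq> 0 because (x, y) \<notin> \<Gamma>.
  For the quadratic cost, letting (x, y) and (a, b) exchange partners gains 2 (a - x) \<bullet> (y - b).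
  If (x' - x) \<bullet> v < 0, the 3-cycle through (x, y), (x, T x) and (x', y) already has positive gain.
  Otherwise strict convexity yields z \<in> X0 with (z - x) \<bullet> v > 0, and by continuity of T the
  points w of the segment from x to z close to x satisfy (w - x) \<bullet> (y - T w) > 0, so exchanging
  with (w, T w) has positive gain.
\<close>

lemma power2_norm_diff_exchange:
  fixes a b c d :: "'a::real_inner"
  shows "(norm (a - b))\<^sup>2 + (norm (c - d))\<^sup>2 - (norm (a - d))\<^sup>2 - (norm (c - b))\<^sup>2
           = 2 * ((c - a) \<bullet> (b - d))"
  by (simp add: power2_norm_eq_inner inner_commute algebra_simps)

lemma I_fun_ge_cycle:
  fixes k :: nat
  assumes "k \<ge> 2" "xs 1 = x" "ys 1 = y" "\<forall>i\<in>{2..k}. (xs i, ys i) \<in> \<Gamma>" "\<sigma> permutes {1..k}"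
  shows "ereal ((\<Sum>i=1..k. c (xs i) (ys i)) - (\<Sum>i=1..k. c (xs i) (ys (\<sigma> i)))) \<le> I_fun c \<Gamma> x y"
  unfolding I_fun_def using assms by (intro SUP_upper2[of "(k, xs, ys, \<sigma>)"]) auto

lemma I_fun_ge_swap:
  assumes "(a, b) \<in> \<Gamma>"
  shows "ereal (c x y + c a b - c x b - c a y) \<le> I_fun c \<Gamma> x y"
proof -
  let ?xs = "\<lambda>i::nat. if i = 1 then x else a"
  let ?ys = "\<lambda>i::nat. if i = 1 then y else b"
  let ?\<sigma> = "Transposition.transpose (1::nat) 2"
  have "?\<sigma> permutes {1..2}" by (rule permutes_swap_id) auto
  from I_fun_ge_cycle[of 2 ?xs x ?ys y \<Gamma> ?\<sigma> c, OF _ _ _ _ this] assms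
  have "ereal ((\<Sum>i=1..2. c (?xs i) (?ys i)) - (\<Sum>i=1..2. c (?xs i) (?ys (?\<sigma> i))))
          \<le> I_fun c \<Gamma> x y"
    by auto
  moreover have "{1..2::nat} = {1, 2}" by auto
  ultimately show ?thesis by (simp add: algebra_simps)
qed

lemma I_fun_ge_three_cycle:
  assumes "(a, b) \<in> \<Gamma>" "(a', y) \<in> \<Gamma>"
  shows "ereal (c a b + c a' y - c a y - c a' b) \<le> I_fun c \<Gamma> x y"
proof -
  let ?xs = "\<lambda>i::nat. if i = 1 then x else if i = 2 then a else a'"
  let ?ys = "\<lambda>i::nat. if i = 1 then y else if i = 2 then b else y"
  let ?\<sigma> = "Transposition.transpose (1::nat) 3 \<circ> Transposition.transpose 2 3"
  have "?\<sigma> permutes {1..3}" by (intro permutes_compose permutes_swap_id) auto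
  from I_fun_ge_cycle[of 3 ?xs x ?ys y \<Gamma> ?\<sigma> c, OF _ _ _ _ this] assms
  have "ereal ((\<Sum>i=1..3. c (?xs i) (?ys i)) - (\<Sum>i=1..3. c (?xs i) (?ys (?\<sigma> i))))
          \<le> I_fun c \<Gamma> x y"
    by auto
  moreover have "{1..3::nat} = {1, 2, 3}" by auto
  ultimately show ?thesis by (simp add: algebra_simps)
qed

lemma I_fun_sq_ge_swap:
  assumes "(a, b) \<in> \<Gamma>"
  shows "ereal (2 * ((a - x) \<bullet> (y - b))) \<le> I_fun (\<lambda>a b. (norm (a - b))\<^sup>2) \<Gamma> x y"
  using I_fun_ge_swap[OF assms, where c = "\<lambda>a b. (norm (a - b))\<^sup>2" and x = x and y = y]
    power2_norm_diff_exchange[of x y a b]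
  by simp

lemma I_fun_sq_ge_three_cycle:
  assumes "(a, b) \<in> \<Gamma>" "(a', y) \<in> \<Gamma>"
  shows "ereal (2 * ((a' - a) \<bullet> (b - y))) \<le> I_fun (\<lambda>a b. (norm (a - b))\<^sup>2) \<Gamma> x y"
  using I_fun_ge_three_cycle[OF assms, where c = "\<lambda>a b. (norm (a - b))\<^sup>2" and x = x]
    power2_norm_diff_exchange[of a b a' y]
  by simp

lemma open_segment_subset_strictly_convex_set:
  assumes "strictly_convex_set X" "a \<in> X" "b \<in> X"
  shows "open_segment a b \<subseteq> X"
  using assms interior_subset unfolding strictly_convex_set_def by (cases "a = b") (auto, blast)

lemma strictly_convex_set_exists_inner_pos:
  fixes v :: "'a::real_inner"
  assumes "strictly_convex_set X" "x \<in> X" "x' \<in> X" "x \<noteq> x'" "v \<noteq> 0" "(x' - x) \<bullet> v \<ge> 0"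
  shows "\<exists>z\<in>X. (z - x) \<bullet> v > 0"
proof -
  define m where "m = midpoint x x'"
  have "m \<in> interior X"
    using assms(1-4) midpoint_in_open_segment[of x x'] unfolding strictly_convex_set_def m_def by blast
  then obtain e where e: "e > 0" "ball m e \<subseteq> X" by (auto simp: mem_interior)
  define z where "z = m + (e / (2 * norm v)) *\<^sub>R v"
  have "dist m z < e" using assms(5) e by (simp add: z_def dist_norm)
  with e have "z \<in> X" by auto
  have "m - x = (1/2) *\<^sub>R (x' - x)"
    by (simp add: m_def midpoint_def algebra_simps flip: scaleR_add_left)
  moreover have "z - x = (m - x) + (e / (2 * norm v)) *\<^sub>R v" by (simp add: z_def)
  ultimately have "(z - x) \<bullet> v = (x' - x) \<bullet> v / 2 + e * norm v / 2"
    using assms(5) by (simp add: inner_add_left dot_square_norm power2_eq_square)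
  also have "\<dots> > 0" using assms(5,6) e by (simp add: add_nonneg_pos)
  finally show ?thesis using \<open>z \<in> X\<close> by blast
qed

lemma exists_inner_pos_near_continuous:
  fixes T :: "'a::real_inner \<Rightarrow> 'a"
  assumes cont: "continuous_on (ball x r \<inter> X) T" and "r > 0" "x \<in> X"
    and seg: "open_segment x z \<subseteq> X" and pos: "(z - x) \<bullet> (y - T x) > 0"
  shows "\<exists>w\<in>X. (w - x) \<bullet> (y - T w) > 0"
proof -
  define g where "g t = x + t *\<^sub>R (z - x)" for t :: real
  have "z \<noteq> x" using pos by auto
  have g_tendsto: "(g \<longlongrightarrow> x) (at_right 0)"
    unfolding g_def by (auto intro!: tendsto_eq_intros)
  have "\<forall>\<^sub>F t in at_right (0::real). 0 < t \<and> t < 1"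
    unfolding eventually_at_right_field by (intro exI[of _ 1]) auto
  moreover have "g t \<in> open_segment x z" if "0 < t" "t < 1" for t
    using that \<open>z \<noteq> x\<close> unfolding g_def in_segment
    by (intro conjI exI[of _ t]) (auto simp: algebra_simps)
  ultimately have ev_seg: "\<forall>\<^sub>F t in at_right 0. 0 < t \<and> g t \<in> open_segment x z"
    by (auto elim: eventually_mono)
  moreover have "\<forall>\<^sub>F t in at_right 0. g t \<in> ball x r"
    using topological_tendstoD[OF g_tendsto open_ball] \<open>r > 0\<close> by simp
  ultimately have "\<forall>\<^sub>F t in at_right 0. g t \<in> ball x r \<inter> X \<and> g t \<noteq> x"
    by eventually_elim (use seg in \<open>auto simp: open_segment_def\<close>)
  then have "filterlim g (at x within ball x r \<inter> X) (at_right 0)"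
    using g_tendsto by (simp add: filterlim_at)
  moreover have "(T \<longlongrightarrow> T x) (at x within ball x r \<inter> X)"
    using cont \<open>r > 0\<close> \<open>x \<in> X\<close> unfolding continuous_on_def by simp
  ultimately have "((\<lambda>t. T (g t)) \<longlongrightarrow> T x) (at_right 0)"
    by (rule filterlim_compose[rotated])
  then have "((\<lambda>t. (z - x) \<bullet> (y - T (g t))) \<longlongrightarrow> (z - x) \<bullet> (y - T x)) (at_right 0)"
    by (intro tendsto_intros)
  then have "\<forall>\<^sub>F t in at_right 0. (z - x) \<bullet> (y - T (g t)) > 0"
    using pos by (rule order_tendstoD)
  with ev_seg have "\<forall>\<^sub>F t in at_right 0.
      (0 < t \<and> g t \<in> open_segment x z) \<and> (z - x) \<bullet> (y - T (g t)) > 0"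
    by (rule eventually_conj)
  then obtain t where "0 < t" "g t \<in> open_segment x z" "(z - x) \<bullet> (y - T (g t)) > 0"
    using eventually_happens'[OF trivial_limit_at_right_real] by blast
  then show ?thesis
    using seg by (intro bexI[of _ "g t"]) (auto simp: g_def)
qed

theorem lemma5p3:
  fixes \<mu> \<nu> :: "'a::euclidean_space measure"
    and \<pi>\<epsilon> :: "real \<Rightarrow> ('a \<times> 'a) measure"
    and \<pi>s :: "('a \<times> 'a) measure"
    and T :: "'a \<Rightarrow> 'a" and x y :: 'a and r :: real
  defines "c \<equiv> (\<lambda>a b :: 'a. (norm (a - b))\<^sup>2)"
  defines "\<Gamma> \<equiv> support \<pi>s"
  defines "X0 \<equiv> fst ` \<Gamma>"
  defines "Y0 \<equiv> snd ` \<Gamma>"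
  assumes "prob_space \<mu>" and "sets \<mu> = sets borel"
    and "prob_space \<nu>" and "sets \<nu> = sets borel"
    and "\<And>\<epsilon>. \<epsilon> > 0 \<Longrightarrow> coupling \<mu> \<nu> (\<pi>\<epsilon> \<epsilon>) \<and> cyclically_invariant c \<epsilon> \<mu> \<nu> (\<pi>\<epsilon> \<epsilon>)"
    and "coupling \<mu> \<nu> \<pi>s"
    and "weak_conv_at_zero \<pi>\<epsilon> \<pi>s"
    and "strictly_convex_set X0"
    and "(x, y) \<in> (X0 \<times> Y0) - \<Gamma>"
    and "x \<in> frontier X0"
    and "\<Gamma> = {(x', T x') | x'. x' \<in> X0}"
    and "r > 0" and "continuous_on (ball x r \<inter> X0) T"
  shows "I_fun c \<Gamma> x y > 0"
proof -
  have graph: "(a, b) \<in> \<Gamma> \<longleftrightarrow> a \<in> X0 \<and> b = T a" for a b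
    using assms(15) by auto
  have "x \<in> X0" "y \<in> Y0" "(x, y) \<notin> \<Gamma>" using assms(13) by auto
  then obtain x' where "x' \<in> X0" "y = T x'" "y \<noteq> T x"
    using graph unfolding Y0_def by force
  have "\<exists>p > 0. ereal p \<le> I_fun c \<Gamma> x y"
  proof (cases "(x' - x) \<bullet> (y - T x) < 0")
    case True
    then show ?thesis unfolding c_def
      using I_fun_sq_ge_three_cycle[of x "T x" \<Gamma> x' y] graph \<open>x \<in> X0\<close> \<open>x' \<in> X0\<close> \<open>y = T x'\<close>
      by (intro exI[of _ "2 * ((x' - x) \<bullet> (T x - y))"]) (auto simp: inner_diff_right)
  next
    case False
    with assms(12) \<open>x \<in> X0\<close> \<open>x' \<in> X0\<close> \<open>y = T x'\<close> \<open>y \<noteq> T x\<close>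
    obtain z where "z \<in> X0" "(z - x) \<bullet> (y - T x) > 0"
      by (metis strictly_convex_set_exists_inner_pos right_minus_eq linorder_not_less)
    with assms(12,16,17) \<open>x \<in> X0\<close> obtain w where "w \<in> X0" "(w - x) \<bullet> (y - T w) > 0"
      by (metis exists_inner_pos_near_continuous open_segment_subset_strictly_convex_set)
    then show ?thesis unfolding c_def
      using I_fun_sq_ge_swap[of w "T w" \<Gamma> x y] graph
      by (intro exI[of _ "2 * ((w - x) \<bullet> (y - T w))"]) auto
  qed
  then show ?thesis by (metis ereal_less(2) less_le_trans)
qed

end
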